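(* Let $p>5$ be a prime, $q=p^h$, and let $\mathcal{F}$ be the projective closure of $ax^ny^m+bx^n+cy^m=1$ over $\mathbb{F}_q$, where $a,b,c\in\mathbb{F}_q^*$, $c\ne-\frac ab$, and $m,n$ are positive integers with $p\nmid mn$, $n\ge m$, $\min\{m,n\}>2$. If $p\mid(n+1)$ and $p\mid(m-1)$, then $\mathcal{F}$ is $\mathbb{F}_q$-Frobenius classical with respect to conics.
   Context: With $\varphi_0,\dots,\varphi_5$ the monomials of degree 2 in $x,y,1$, $\tau$ separating and $D^{(k)}_\tau$ Hasse derivatives, the $\mathbb{F}_q$-Frobenius order sequence w.r.t. conics is the lexicographically smallest $\nu_0<\dots<\nu_4$ such that the $6\times6$ determinant with first row $(\varphi_j^q)_j$ and rows $(D^{(\nu_i)}_\tau\varphi_j)_j$ is nonzero; the curve is $\mathbb{F}_q$-Frobenius classical w.r.t. conics if $\nu_i=i$ for all $i$. *)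

theory Defs
  imports "HOL-Computational_Algebra.Polynomial" "Jordan_Normal_Form.Determinant"
begin

definition Fq_set :: "nat \<Rightarrow> 'k::field set" where
  "Fq_set q = {c. c ^ q = c}"

definition is_hasse_deriv :: "'k::field set \<Rightarrow> 'k \<Rightarrow> (nat \<Rightarrow> 'k \<Rightarrow> 'k) \<Rightarrow> bool" where
  "is_hasse_deriv F tau D \<longleftrightarrow>
     (\<forall>f. D 0 f = f) \<and>
     (\<forall>k f g. D k (f + g) = D k f + D k g) \<and>
     (\<forall>k f g. D k (f * g) = (\<Sum>i\<le>k. D i f * D (k - i) g)) \<and>
     (\<forall>k c. 1 \<le> k \<longrightarrow> c \<in> F \<longrightarrow> D k c = 0) \<and>
     D 1 tau = 1 \<and> (\<forall>k. 2 \<le> k \<longrightarrow> D k tau = 0)"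

definition conic_monomials :: "'k::field \<Rightarrow> 'k \<Rightarrow> nat \<Rightarrow> 'k" where
  "conic_monomials x y j = [1, x, y, x^2, x*y, y^2] ! j"

definition frob_det :: "nat \<Rightarrow> (nat \<Rightarrow> 'k::field \<Rightarrow> 'k) \<Rightarrow> (nat \<Rightarrow> 'k) \<Rightarrow> nat list \<Rightarrow> 'k" where
  "frob_det q D phi nu = det (mat 6 6 (\<lambda>(i, j).
      if i = 0 then phi j ^ q else D (nu ! (i - 1)) (phi j)))"

definition lex_less :: "nat list \<Rightarrow> nat list \<Rightarrow> bool" where
  "lex_less u v \<longleftrightarrow> (\<exists>k < length v. k < length u \<and> (\<forall>i<k. u ! i = v ! i) \<and> u ! k < v ! k)"

definition admissible_seq :: "nat list \<Rightarrow> bool" where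
  "admissible_seq nu \<longleftrightarrow> length nu = 5 \<and> sorted_wrt (<) nu"

definition is_frob_order_seq :: "nat \<Rightarrow> (nat \<Rightarrow> 'k::field \<Rightarrow> 'k) \<Rightarrow> (nat \<Rightarrow> 'k) \<Rightarrow> nat list \<Rightarrow> bool" where
  "is_frob_order_seq q D phi nu \<longleftrightarrow>
     admissible_seq nu \<and> frob_det q D phi nu \<noteq> 0 \<and>
     (\<forall>nu'. admissible_seq nu' \<and> lex_less nu' nu \<longrightarrow> frob_det q D phi nu' = 0)"

definition frobenius_classical_conics :: "nat \<Rightarrow> (nat \<Rightarrow> 'k::field \<Rightarrow> 'k) \<Rightarrow> 'k \<Rightarrow> 'k \<Rightarrow> bool" where
  "frobenius_classical_conics q D x y \<longleftrightarrow>
     is_frob_order_seq q D (conic_monomials x y) [0, 1, 2, 3, 4]"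

definition transcendental_over :: "'k::field set \<Rightarrow> 'k \<Rightarrow> bool" where
  "transcendental_over F x \<longleftrightarrow>
     (\<forall>P :: 'k poly. P \<noteq> 0 \<longrightarrow> (\<forall>i. coeff P i \<in> F) \<longrightarrow> poly P x \<noteq> 0)"

text \<open>Every element of the field is a rational function in x, y with coefficients in F,
  i.e. the field equals F(x, y).\<close>
definition generated_by :: "'k::field set \<Rightarrow> 'k \<Rightarrow> 'k \<Rightarrow> bool" where
  "generated_by F x y \<longleftrightarrow>
     (\<forall>z. \<exists>N (P :: nat \<Rightarrow> 'k poly) (Q :: nat \<Rightarrow> 'k poly).
        (\<forall>i j. coeff (P i) j \<in> F \<and> coeff (Q i) j \<in> F) \<and>
        (\<Sum>i\<le>N. poly (Q i) x * y ^ i) \<noteq> 0 \<and>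
        z = (\<Sum>i\<le>N. poly (P i) x * y ^ i) / (\<Sum>i\<le>N. poly (Q i) x * y ^ i))"

end

theory Submission
  imports Defs "HOL-Computational_Algebra.Formal_Power_Series" "HOL-Computational_Algebra.Primes"
begin

(* Since p divides n + 1 and m - 1, C = x^(n+1) and E = y^(m-1) are p-th powers, hence constants
   for the Hasse derivatives D^(k) with 0 < k < p. The curve equation says x (1 - cEy) = bC + aCEy,
   so after multiplication by H = (1 - cEy)^2 each conic monomial is a polynomial of degree at most 4
   in y with such constant coefficients. The Leibniz rule then turns H^5 times the Frobenius
   determinant into (D^(1) y)^10 times the determinant of the coefficient matrix below the Frobenius
   row, and that determinant vanishes only if (x^q, y^q) satisfies the same Moebius relation.
   D^(1) y is nonzero, as otherwise D^(1) would kill all of F_q(x, y) including tau. Finally, if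
   (x^q, y^q) satisfied the relation, eliminating y would give a polynomial identity in the
   transcendental x which coprimality and a degree count rule out. *)

section \<open>The subfield F_q\<close>

lemma CHAR_eq_prime:
  assumes "prime p" and "of_nat p = (0::'a::idom)"
  shows "CHAR('a) = p"
proof -
  have "CHAR('a) dvd p"
    using assms(2) by (simp add: of_nat_eq_0_iff_char_dvd)
  then show ?thesis
    using assms(1) by (auto simp: prime_nat_iff)
qed

definition poly_over :: "'a::zero set \<Rightarrow> 'a poly \<Rightarrow> bool" where
  "poly_over S P \<longleftrightarrow> (\<forall>i. coeff P i \<in> S)"

locale subring_set =
  fixes S :: "'a::comm_ring_1 set"
  assumes zero_mem: "0 \<in> S" and one_mem: "1 \<in> S"
    and add_mem: "a \<in> S \<Longrightarrow> b \<in> S \<Longrightarrow> a + b \<in> S"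
    and mult_mem: "a \<in> S \<Longrightarrow> b \<in> S \<Longrightarrow> a * b \<in> S"
    and uminus_mem: "a \<in> S \<Longrightarrow> - a \<in> S"
begin

lemma sum_mem: "(\<And>i. i \<in> A \<Longrightarrow> f i \<in> S) \<Longrightarrow> (\<Sum>i\<in>A. f i) \<in> S"
  by (induction A rule: infinite_finite_induct) (auto intro: zero_mem add_mem)

lemma poly_over_add [intro]: "poly_over S P \<Longrightarrow> poly_over S Q \<Longrightarrow> poly_over S (P + Q)"
  unfolding poly_over_def by (auto intro: add_mem)

lemma poly_over_uminus [intro]: "poly_over S P \<Longrightarrow> poly_over S (- P)"
  unfolding poly_over_def by (auto intro: uminus_mem)

lemma poly_over_diff [intro]: "poly_over S P \<Longrightarrow> poly_over S Q \<Longrightarrow> poly_over S (P - Q)"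
  using poly_over_add[of P "- Q"] by auto

lemma poly_over_mult [intro]: "poly_over S P \<Longrightarrow> poly_over S Q \<Longrightarrow> poly_over S (P * Q)"
  unfolding poly_over_def coeff_mult by (auto intro!: sum_mem mult_mem)

lemma poly_over_monom [intro]: "c \<in> S \<Longrightarrow> poly_over S (monom c n)"
  unfolding poly_over_def by (auto simp: coeff_monom intro: zero_mem)

lemma poly_over_one [intro]: "poly_over S 1"
  using poly_over_monom[OF one_mem, of 0] by (simp add: one_pCons monom_0)

lemma poly_over_power [intro]: "poly_over S P \<Longrightarrow> poly_over S (P ^ n)"
  by (induction n) auto

end

lemma subring_set_Fq_set:
  assumes "prime CHAR('k)" and "q = CHAR('k) ^ h"
  shows "subring_set (Fq_set q :: 'k::field set)"
proof
  have frob: "(u + v :: 'k) ^ q = u ^ q + v ^ q" for u v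
    using freshmans_dream'[OF assms] .
  have "q > 0"
    using assms by (simp add: prime_gt_0_nat)
  then show "0 \<in> Fq_set q"
    by (simp add: Fq_set_def)
  show "1 \<in> Fq_set q"
    by (simp add: Fq_set_def)
  show "u + v \<in> Fq_set q" if "u \<in> Fq_set q" "v \<in> Fq_set q" for u v :: 'k
    using that frob[of u v] by (simp add: Fq_set_def)
  show "u * v \<in> Fq_set q" if "u \<in> Fq_set q" "v \<in> Fq_set q" for u v :: 'k
    using that by (simp add: Fq_set_def power_mult_distrib)
  show "- u \<in> Fq_set q" if "u \<in> Fq_set q" for u :: 'k
  proof -
    have "0 = u + (- u) ^ q"
      using frob[of u "- u"] that \<open>q > 0\<close> by (simp add: Fq_set_def zero_power)
    then show ?thesis
      by (simp add: Fq_set_def eq_neg_iff_add_eq_0 add.commute)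
  qed
qed

section \<open>Hasse derivations\<close>

locale hasse_derivation =
  fixes F :: "'k::field set" and tau :: 'k and D :: "nat \<Rightarrow> 'k \<Rightarrow> 'k"
  assumes hasse: "is_hasse_deriv F tau D"
begin

lemma D_0 [simp]: "D 0 f = f"
  using hasse unfolding is_hasse_deriv_def by blast

lemma D_add: "D k (f + g) = D k f + D k g"
  using hasse unfolding is_hasse_deriv_def by blast

lemma D_mult: "D k (f * g) = (\<Sum>i\<le>k. D i f * D (k - i) g)"
  using hasse unfolding is_hasse_deriv_def by blast

lemma D_const: "0 < k \<Longrightarrow> c \<in> F \<Longrightarrow> D k c = 0"
  using hasse unfolding is_hasse_deriv_def by auto

lemma D1_tau: "D 1 tau = 1"
  using hasse unfolding is_hasse_deriv_def by blast

lemma D_zero [simp]: "D k 0 = 0"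
  using D_add[of k 0 0] by (metis add.right_neutral add_left_cancel)

lemma D_uminus: "D k (- f) = - D k f"
  using D_add[of k f "- f"] by (simp add: add_eq_0_iff)

lemma D_diff: "D k (f - g) = D k f - D k g"
  using D_add[of k f "- g"] by (simp add: D_uminus)

lemma D_sum: "D k (\<Sum>i\<in>A. f i) = (\<Sum>i\<in>A. D k (f i))"
  by (induction A rule: infinite_finite_induct) (auto simp: D_add)

lemma D_mult_rev: "D i (f * g) = (\<Sum>k\<le>i. D (i - k) f * D k g)"
  using D_mult[of i g f] by (simp add: mult.commute)

definition hasse_series :: "'k \<Rightarrow> 'k fps" where
  "hasse_series f = Abs_fps (\<lambda>k. D k f)"

lemma hasse_series_nth [simp]: "fps_nth (hasse_series f) k = D k f"
  by (simp add: hasse_series_def)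

lemma hasse_series_mult: "hasse_series (f * g) = hasse_series f * hasse_series g"
  by (rule fps_ext) (simp add: fps_mult_nth D_mult atMost_atLeast0)

lemma hasse_series_one: "hasse_series 1 = 1"
proof -
  have "hasse_series 1 * hasse_series 1 = hasse_series 1 * 1"
    by (simp flip: hasse_series_mult)
  moreover have "hasse_series 1 \<noteq> 0"
    using fps_nonzeroI[of "hasse_series 1" 0] by simp
  ultimately show ?thesis
    by simp
qed

lemma D_one: "D k 1 = (if k = 0 then 1 else 0)"
  using arg_cong[OF hasse_series_one, of "\<lambda>f. fps_nth f k"] by simp

lemma hasse_series_power: "hasse_series (f ^ n) = hasse_series f ^ n"
  by (induction n) (simp_all add: hasse_series_one hasse_series_mult)

definition hasse_tail :: "'k \<Rightarrow> 'k fps" where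
  "hasse_tail z = fps_shift 1 (hasse_series z)"

lemma hasse_tail_nth_0 [simp]: "fps_nth (hasse_tail z) 0 = D 1 z"
  by (simp add: hasse_tail_def)

lemma hasse_series_eq_tail: "hasse_series z = fps_const z + fps_X * hasse_tail z"
  by (rule fps_ext) (simp add: fps_X_mult_nth hasse_tail_def)

lemma fps_X_hasse_tail_power_nth:
  "fps_nth ((fps_X * hasse_tail z) ^ l) k =
     (if k < l then 0 else fps_nth (hasse_tail z ^ l) (k - l))"
  by (simp add: power_mult_distrib fps_X_power_mult_nth)

lemma D_power:
  "D k (z ^ i) = (\<Sum>l\<le>i. of_nat (i choose l) * z ^ (i - l) * fps_nth ((fps_X * hasse_tail z) ^ l) k)"
proof -
  have "hasse_series (z ^ i) = (fps_X * hasse_tail z + fps_const z) ^ i"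
    by (metis hasse_series_eq_tail hasse_series_power add.commute)
  also have "\<dots> = (\<Sum>l\<le>i. of_nat (i choose l) * (fps_X * hasse_tail z) ^ l * fps_const z ^ (i - l))"
    by (rule binomial_ring)
  finally have "fps_nth (hasse_series (z ^ i)) k = fps_nth (\<Sum>l\<le>i. of_nat (i choose l) *
      (fps_X * hasse_tail z) ^ l * fps_const z ^ (i - l)) k"
    by (rule arg_cong)
  then show ?thesis
    by (simp add: fps_sum_nth fps_of_nat[symmetric] mult_ac)
qed

definition constant_below :: "nat \<Rightarrow> 'k \<Rightarrow> bool" where
  "constant_below r c \<longleftrightarrow> (\<forall>k. 0 < k \<longrightarrow> k < r \<longrightarrow> D k c = 0)"

lemma constant_belowD: "constant_below r c \<Longrightarrow> 0 < k \<Longrightarrow> k < r \<Longrightarrow> D k c = 0"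
  unfolding constant_below_def by blast

lemma constant_below_2_iff: "constant_below 2 c \<longleftrightarrow> D 1 c = 0"
  unfolding constant_below_def by (auto simp: less_2_cases_iff)

lemma constant_below_mono: "constant_below r c \<Longrightarrow> s \<le> r \<Longrightarrow> constant_below s c"
  unfolding constant_below_def by auto

lemma D_mult_constant_below:
  assumes "constant_below r c" and "k < r"
  shows "D k (c * f) = c * D k f"
proof -
  have "D k (c * f) = (\<Sum>i\<le>k. D i c * D (k - i) f)"
    by (rule D_mult)
  also have "\<dots> = (\<Sum>i\<in>{0}. D i c * D (k - i) f)"
    using assms by (intro sum.mono_neutral_right) (auto simp: constant_below_def)
  finally show ?thesis
    by simp
qed

lemma constant_below_mult [intro]: "constant_below r c \<Longrightarrow> constant_below r d \<Longrightarrow> constant_below r (c * d)"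
  unfolding constant_below_def by (simp add: D_mult_constant_below[unfolded constant_below_def])

lemma constant_below_add [intro]: "constant_below r c \<Longrightarrow> constant_below r d \<Longrightarrow> constant_below r (c + d)"
  unfolding constant_below_def by (simp add: D_add)

lemma constant_below_uminus [intro]: "constant_below r c \<Longrightarrow> constant_below r (- c)"
  unfolding constant_below_def by (simp add: D_uminus)

lemma constant_below_diff [intro]: "constant_below r c \<Longrightarrow> constant_below r d \<Longrightarrow> constant_below r (c - d)"
  unfolding constant_below_def by (simp add: D_diff)

lemma constant_below_mem [intro]: "c \<in> F \<Longrightarrow> constant_below r c"
  unfolding constant_below_def by (simp add: D_const)

lemma constant_below_zero [intro]: "constant_below r 0"
  unfolding constant_below_def by simp

lemma constant_below_one [intro]: "constant_below r 1"
  unfolding constant_below_def by (simp add: D_one)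

lemma constant_below_numeral [intro]: "constant_below r (numeral w)"
  by (induction w) (simp_all only: numeral.simps constant_below_add constant_below_one)

lemma constant_below_power [intro]: "constant_below r c \<Longrightarrow> constant_below r (c ^ n)"
  by (induction n) auto

lemma constant_below_sum [intro]:
  "(\<And>i. i \<in> A \<Longrightarrow> constant_below r (f i)) \<Longrightarrow> constant_below r (\<Sum>i\<in>A. f i)"
  unfolding constant_below_def by (simp add: D_sum)

lemma constant_below_divide [intro]:
  assumes "constant_below r c" and "constant_below r d" and "d \<noteq> 0"
  shows "constant_below r (c / d)"
  unfolding constant_below_def
proof (intro allI impI)
  fix k assume "0 < k" "k < r"
  have "d * D k (c / d) = D k (d * (c / d))"
    by (rule D_mult_constant_below[OF assms(2) \<open>k < r\<close>, symmetric])
  also have "\<dots> = D k c"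
    using assms(3) by simp
  also have "\<dots> = 0"
    using assms(1) \<open>0 < k\<close> \<open>k < r\<close> by (rule constant_belowD)
  finally show "D k (c / d) = 0"
    using assms(3) by simp
qed

lemma constant_below_poly:
  "constant_below r x \<Longrightarrow> \<forall>i. coeff P i \<in> F \<Longrightarrow> constant_below r (poly P x)"
proof (induction P rule: pCons_induct)
  case (pCons a P)
  have "a \<in> F"
    using pCons.prems(2) by (metis coeff_pCons_0)
  have "\<forall>i. coeff P i \<in> F"
    using pCons.prems(2) by (metis coeff_pCons_Suc)
  then have "constant_below r (poly P x)"
    using pCons.IH pCons.prems(1) by blast
  then show ?case
    using \<open>a \<in> F\<close> pCons.prems(1) by (simp add: constant_below_add constant_below_mult constant_below_mem)
qed (simp add: constant_below_zero)

text \<open>Freshman's dream in the power series ring: with G = hasse_tail z,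
  hasse_series (z^p) = (z + X G)^p = z^p + X^p G^p.\<close>
lemma constant_below_char_power:
  assumes "prime p" and "of_nat p = (0::'k)"
  shows "constant_below p (z ^ p)"
  unfolding constant_below_def
proof (intro allI impI)
  fix k assume "0 < k" "k < p"
  have "CHAR('k) = p"
    using CHAR_eq_prime[OF assms] .
  have "hasse_series (z ^ p) = (fps_const z + fps_X * hasse_tail z) ^ p"
    by (metis hasse_series_eq_tail hasse_series_power)
  also have "\<dots> = fps_const z ^ p + (fps_X * hasse_tail z) ^ p"
    by (rule freshmans_dream) (simp_all add: \<open>CHAR('k) = p\<close> assms(1))
  finally have "fps_nth (hasse_series (z ^ p)) k = fps_nth (fps_const z ^ p + (fps_X * hasse_tail z) ^ p) k"
    by (rule arg_cong)
  then show "D k (z ^ p) = 0"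
    using \<open>0 < k\<close> \<open>k < p\<close> by (simp add: fps_X_hasse_tail_power_nth)
qed

lemma constant_below_char_power_multiple:
  assumes "prime p" and "of_nat p = (0::'k)" and "p dvd k"
  shows "constant_below p (z ^ k)"
proof -
  obtain t where "k = p * t"
    using assms(3) by blast
  then show ?thesis
    using constant_below_char_power[OF assms(1,2)] by (simp add: power_mult constant_below_power)
qed

lemma constant_below_generated:
  assumes "generated_by F x y" and "constant_below r x" and "constant_below r y"
  shows "constant_below r z"
proof -
  obtain N P Q where PQ: "\<forall>i j. coeff (P i) j \<in> F \<and> coeff (Q i) j \<in> F"
    and den: "(\<Sum>i\<le>N. poly (Q i) x * y ^ i) \<noteq> 0"
    and z: "z = (\<Sum>i\<le>N. poly (P i) x * y ^ i) / (\<Sum>i\<le>N. poly (Q i) x * y ^ i)"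
    using assms(1) unfolding generated_by_def by blast
  have "constant_below r (\<Sum>i\<le>N. poly (R i) x * y ^ i)" if "\<forall>i j. coeff (R i) j \<in> F" for R
  proof (rule constant_below_sum)
    fix i
    have "constant_below r (poly (R i) x)"
      using that assms(2) by (simp add: constant_below_poly)
    then show "constant_below r (poly (R i) x * y ^ i)"
      using assms(3) by (simp add: constant_below_mult constant_below_power)
  qed
  then show ?thesis
    unfolding z using PQ den by (simp add: constant_below_divide)
qed

lemma D1_generator_ne_0:
  assumes "generated_by F x y" and "D 1 x = 0"
  shows "D 1 y \<noteq> 0"
proof
  assume "D 1 y = 0"
  then have "constant_below 2 x" and "constant_below 2 y"
    using assms(2) by (simp_all add: constant_below_2_iff)
  then have "constant_below 2 tau"
    by (rule constant_below_generated[OF assms(1)])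
  then show False
    using D1_tau by (simp add: constant_below_2_iff)
qed

end

section \<open>A Wronskian identity\<close>

definition border_one_mat :: "nat \<Rightarrow> (nat \<Rightarrow> nat \<Rightarrow> 'a::comm_ring_1) \<Rightarrow> 'a mat" where
  "border_one_mat n f = mat (Suc n) (Suc n)
     (\<lambda>(i, j). if i = 0 \<or> j = 0 then (if i = j then 1 else 0) else f (i - 1) (j - 1))"

definition top_row_mat :: "nat \<Rightarrow> (nat \<Rightarrow> 'a) \<Rightarrow> (nat \<Rightarrow> nat \<Rightarrow> 'a) \<Rightarrow> 'a mat" where
  "top_row_mat n r G = mat (Suc n) (Suc n) (\<lambda>(i, j). if i = 0 then r j else G (i - 1) j)"

lemma border_one_mat_carrier [simp]: "border_one_mat n f \<in> carrier_mat (Suc n) (Suc n)"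
  by (simp add: border_one_mat_def)

lemma top_row_mat_carrier [simp]: "top_row_mat n r G \<in> carrier_mat (Suc n) (Suc n)"
  by (simp add: top_row_mat_def)

lemma border_one_mat_cong:
  "(\<And>i j. i < n \<Longrightarrow> j < n \<Longrightarrow> f i j = g i j) \<Longrightarrow> border_one_mat n f = border_one_mat n g"
  unfolding border_one_mat_def by (rule eq_matI) auto

lemma top_row_mat_cong:
  "(\<And>j. j \<le> n \<Longrightarrow> r j = r' j) \<Longrightarrow> (\<And>i j. i < n \<Longrightarrow> j \<le> n \<Longrightarrow> G i j = G' i j)
    \<Longrightarrow> top_row_mat n r G = top_row_mat n r' G'"
  unfolding top_row_mat_def by (rule eq_matI) auto

lemma border_one_mat_mult:
  "border_one_mat n f * border_one_mat n g = border_one_mat n (\<lambda>i j. \<Sum>k<n. f i k * g k j)"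
  unfolding border_one_mat_def
  by (rule eq_matI) (auto simp: scalar_prod_def atLeast0LessThan sum.lessThan_Suc_shift simp del: sum.lessThan_Suc)

lemma border_one_mat_mult_top_row_mat:
  "border_one_mat n f * top_row_mat n r G = top_row_mat n r (\<lambda>i j. \<Sum>k<n. f i k * G k j)"
  unfolding border_one_mat_def top_row_mat_def
  by (rule eq_matI) (auto simp: scalar_prod_def atLeast0LessThan sum.lessThan_Suc_shift simp del: sum.lessThan_Suc)

lemma det_border_one_mat_lower:
  assumes "\<And>i j. i < j \<Longrightarrow> j < n \<Longrightarrow> f i j = 0"
  shows "det (border_one_mat n f) = (\<Prod>i<n. f i i)"
proof -
  have "det (border_one_mat n f) = prod_list (diag_mat (border_one_mat n f))"
    using assms by (intro det_lower_triangular[of "Suc n"]) (auto simp: border_one_mat_def)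
  also have "\<dots> = (\<Prod>i<n. f i i)"
    by (simp add: prod_list_diag_prod border_one_mat_def atLeast0LessThan prod.lessThan_Suc_shift del: prod.lessThan_Suc)
  finally show ?thesis .
qed

lemma det_border_one_mat_upper:
  assumes "\<And>i j. j < i \<Longrightarrow> i < n \<Longrightarrow> f i j = 0"
  shows "det (border_one_mat n f) = (\<Prod>i<n. f i i)"
proof -
  have "det (border_one_mat n f) = prod_list (diag_mat (border_one_mat n f))"
    using assms by (intro det_upper_triangular[of _ "Suc n"]) (auto simp: border_one_mat_def upper_triangular_def)
  also have "\<dots> = (\<Prod>i<n. f i i)"
    by (simp add: prod_list_diag_prod border_one_mat_def atLeast0LessThan prod.lessThan_Suc_shift del: prod.lessThan_Suc)
  finally show ?thesis .
qed

context hasse_derivation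
begin

lemma leibniz_mat_mult_top_row_mat:
  "border_one_mat N (\<lambda>i k. if k \<le> i then D (i - k) H else 0) * top_row_mat N r (\<lambda>i j. D i (phi j))
     = top_row_mat N r (\<lambda>i j. D i (H * phi j))"
  unfolding border_one_mat_mult_top_row_mat
proof (rule top_row_mat_cong[OF refl])
  fix i j assume "i < N"
  have "(\<Sum>k<N. (if k \<le> i then D (i - k) H else 0) * D k (phi j))
      = (\<Sum>k\<le>i. D (i - k) H * D k (phi j))"
    using \<open>i < N\<close> by (intro sum.mono_neutral_cong_right) auto
  then show "(\<Sum>k<N. (if k \<le> i then D (i - k) H else 0) * D k (phi j)) = D i (H * phi j)"
    by (simp add: D_mult_rev)
qed

lemma D_power_mat_factor:
  "border_one_mat N (\<lambda>i l. D i (y ^ l))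
     = border_one_mat N (\<lambda>i l. fps_nth ((fps_X * hasse_tail y) ^ l) i)
       * border_one_mat N (\<lambda>l j. of_nat (j choose l) * y ^ (j - l))"
  unfolding border_one_mat_mult
proof (rule border_one_mat_cong)
  fix i j assume "j < N"
  have "D i (y ^ j) = (\<Sum>l\<le>j. of_nat (j choose l) * y ^ (j - l) * fps_nth ((fps_X * hasse_tail y) ^ l) i)"
    by (rule D_power)
  also have "\<dots> = (\<Sum>l<N. fps_nth ((fps_X * hasse_tail y) ^ l) i * (of_nat (j choose l) * y ^ (j - l)))"
    using \<open>j < N\<close> by (intro sum.mono_neutral_cong_left) (auto simp: binomial_eq_0)
  finally show "D i (y ^ j) = (\<Sum>l<N. fps_nth ((fps_X * hasse_tail y) ^ l) i * (of_nat (j choose l) * y ^ (j - l)))" .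
qed

text \<open>The Leibniz matrix of H (determinant H^N) turns the rows D^(i) phi_j into
  D^(i) (H phi_j) = sum_l A l j D^(i) y^l, and the matrix (D^(i) y^l) is a lower triangular
  matrix with diagonal (D^(1) y)^l times the upper unitriangular binomial matrix.\<close>
lemma det_top_row_mat_hasse_reduction:
  assumes const: "\<And>l j. l < N \<Longrightarrow> j \<le> N \<Longrightarrow> constant_below N (A l j)"
    and rep: "\<And>j. j \<le> N \<Longrightarrow> H * phi j = (\<Sum>l<N. A l j * y ^ l)"
  shows "H ^ N * det (top_row_mat N r (\<lambda>i j. D i (phi j)))
       = (\<Prod>l<N. D 1 y ^ l) * det (top_row_mat N r A)"
proof -
  define L where "L = border_one_mat N (\<lambda>i k. if k \<le> i then D (i - k) H else 0)"
  define B where "B = border_one_mat N (\<lambda>i l. fps_nth ((fps_X * hasse_tail y) ^ l) i)"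
  define U where "U = border_one_mat N (\<lambda>l j. of_nat (j choose l) * y ^ (j - l))"
  have "L * top_row_mat N r (\<lambda>i j. D i (phi j)) = top_row_mat N r (\<lambda>i j. D i (H * phi j))"
    unfolding L_def by (rule leibniz_mat_mult_top_row_mat)
  also have "\<dots> = top_row_mat N r (\<lambda>i j. \<Sum>l<N. D i (y ^ l) * A l j)"
  proof (rule top_row_mat_cong[OF refl])
    fix i j assume "i < N" "j \<le> N"
    have "D i (H * phi j) = (\<Sum>l<N. D i (A l j * y ^ l))"
      using rep \<open>j \<le> N\<close> by (simp add: D_sum)
    also have "\<dots> = (\<Sum>l<N. D i (y ^ l) * A l j)"
      using \<open>i < N\<close> \<open>j \<le> N\<close>
      by (intro sum.cong refl) (simp add: D_mult_constant_below[OF const] mult.commute)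
    finally show "D i (H * phi j) = (\<Sum>l<N. D i (y ^ l) * A l j)" .
  qed
  also have "\<dots> = border_one_mat N (\<lambda>i l. D i (y ^ l)) * top_row_mat N r A"
    by (simp add: border_one_mat_mult_top_row_mat)
  also have "\<dots> = B * U * top_row_mat N r A"
    unfolding B_def U_def by (simp only: D_power_mat_factor)
  finally have LBU: "L * top_row_mat N r (\<lambda>i j. D i (phi j)) = B * U * top_row_mat N r A" .
  have carrier: "L \<in> carrier_mat (Suc N) (Suc N)" "B \<in> carrier_mat (Suc N) (Suc N)"
    "U \<in> carrier_mat (Suc N) (Suc N)"
    by (simp_all add: L_def B_def U_def)
  have "det L = H ^ N"
    unfolding L_def by (subst det_border_one_mat_lower) auto
  have "det B = (\<Prod>l<N. D 1 y ^ l)"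
    unfolding B_def
    by (subst det_border_one_mat_lower) (auto simp: fps_X_hasse_tail_power_nth fps_nth_power_0)
  have "det U = 1"
    unfolding U_def by (subst det_border_one_mat_upper) (auto simp: binomial_eq_0)
  have "H ^ N * det (top_row_mat N r (\<lambda>i j. D i (phi j))) = det (L * top_row_mat N r (\<lambda>i j. D i (phi j)))"
    using \<open>det L = H ^ N\<close> carrier by (simp add: det_mult)
  also have "\<dots> = det B * det U * det (top_row_mat N r A)"
    unfolding LBU using carrier
    by (simp add: det_mult[of "B * U" "Suc N"] det_mult[of B "Suc N" U] mult_carrier_mat)
  finally show ?thesis
    using \<open>det B = (\<Prod>l<N. D 1 y ^ l)\<close> \<open>det U = 1\<close> by simp
qed

end

section \<open>Conics and a Moebius relation\<close>

text \<open>Column j lists the coefficients of y^0, ..., y^4 in (1 - u y)^2 phi_j, where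
  phi = (1, x, y, x^2, x y, y^2) and x (1 - u y) = v + w y.\<close>
definition conic_coeffs :: "'a::comm_ring_1 \<Rightarrow> 'a \<Rightarrow> 'a \<Rightarrow> 'a list list" where
  "conic_coeffs u v w =
     [[1, v, 0, v^2, 0, 0],
      [-2*u, w - u*v, 1, 2*v*w, v, 0],
      [u^2, -u*w, -2*u, w^2, w - u*v, 1],
      [0, 0, u^2, 0, -u*w, -2*u],
      [0, 0, 0, 0, 0, u^2]]"

lemma top_row_mat_eq_mat_of_rows_list:
  "length rs = n \<Longrightarrow> top_row_mat n (\<lambda>j. r ! j) (\<lambda>i j. rs ! i ! j) = mat_of_rows_list (Suc n) (r # rs)"
  unfolding top_row_mat_def mat_of_rows_list_def by (rule eq_matI) (auto simp: nth_Cons')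

lemma det_mat_of_rows_list_Nil: "det (mat_of_rows_list 0 []) = 1"
  by (simp add: mat_of_rows_list_def)

lemma det_mat_of_rows_list_Cons:
  assumes "length r = n" and "n = Suc (length rs)" and "\<forall>x\<in>set rs. length x = n"
  shows "det (mat_of_rows_list n (r # rs)) =
    (\<Sum>j<n. (-1) ^ j * r ! j * det (mat_of_rows_list (n - 1) (map (\<lambda>x. take j x @ drop (Suc j) x) rs)))"
proof -
  let ?A = "mat_of_rows_list n (r # rs)"
  have "?A \<in> carrier_mat n n"
    using assms(2) by (simp add: mat_of_rows_list_def)
  then have "det ?A = (\<Sum>j<n. ?A $$ (0, j) * cofactor ?A 0 j)"
    by (rule laplace_expansion_row) (simp add: assms(2))
  also have "\<dots> = (\<Sum>j<n. (-1) ^ j * r ! j * det (mat_of_rows_list (n - 1) (map (\<lambda>x. take j x @ drop (Suc j) x) rs)))"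
  proof (intro sum.cong refl)
    fix j assume "j \<in> {..<n}"
    have "mat_delete ?A 0 j = mat_of_rows_list (n - 1) (map (\<lambda>x. take j x @ drop (Suc j) x) rs)"
      unfolding mat_delete_def mat_of_rows_list_def
      using assms \<open>j \<in> {..<n}\<close> by (intro eq_matI) (auto simp: nth_append min_def)
    then show "?A $$ (0, j) * cofactor ?A 0 j = (-1) ^ j * r ! j * det (mat_of_rows_list (n - 1) (map (\<lambda>x. take j x @ drop (Suc j) x) rs))"
      using \<open>j \<in> {..<n}\<close> assms(2) unfolding cofactor_def by (simp add: mat_of_rows_list_def)
  qed
  finally show ?thesis .
qed

lemma det_top_row_mat_conic_coeffs:
  fixes u v w X Y :: "'a::comm_ring_1"
  shows "det (top_row_mat 5 (\<lambda>j. [1, X, Y, X^2, X*Y, Y^2] ! j) (\<lambda>l j. conic_coeffs u v w ! l ! j))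
       = (X * (1 - u * Y) - (v + w * Y)) * u ^ 3 * (w + u * v) ^ 3"
proof -
  have "det (top_row_mat 5 (\<lambda>j. [1, X, Y, X^2, X*Y, Y^2] ! j) (\<lambda>l j. conic_coeffs u v w ! l ! j))
      = det (mat_of_rows_list 6 ([1, X, Y, X^2, X*Y, Y^2] # conic_coeffs u v w))"
    by (subst top_row_mat_eq_mat_of_rows_list) (simp_all add: conic_coeffs_def)
  also have "\<dots> = (X * (1 - u * Y) - (v + w * Y)) * u ^ 3 * (w + u * v) ^ 3"
    unfolding conic_coeffs_def
    by (simp add: det_mat_of_rows_list_Cons det_mat_of_rows_list_Nil lessThan_Suc eval_nat_numeral) (simp add: algebra_simps)
  finally show ?thesis .
qed

lemma conic_monomials_moebius:
  fixes x y u v w :: "'a::field"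
  assumes moebius: "x * (1 - u * y) = v + w * y" and "j \<le> 5"
  shows "(1 - u * y) ^ 2 * conic_monomials x y j = (\<Sum>l<5. conic_coeffs u v w ! l ! j * y ^ l)"
proof -
  have x1: "(1 - u * y) ^ 2 * x = (1 - u * y) * (v + w * y)"
    unfolding moebius[symmetric] by (simp add: power2_eq_square mult_ac)
  have x2: "(1 - u * y) ^ 2 * x ^ 2 = (v + w * y) ^ 2"
    unfolding moebius[symmetric] by (simp add: power_mult_distrib mult.commute)
  have x1y: "(1 - u * y) ^ 2 * (x * y) = (1 - u * y) * (v + w * y) * y"
    using x1 by (metis mult.assoc)
  consider "j = 0" | "j = 1" | "j = 2" | "j = 3" | "j = 4" | "j = 5"
    using \<open>j \<le> 5\<close> by linarith
  then show ?thesis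
    by cases (simp_all add: conic_monomials_def x1 x2 x1y,
        simp_all add: conic_coeffs_def numeral_eq_Suc lessThan_Suc power2_eq_square algebra_simps)
qed

lemma frob_det_eq_det_top_row_mat:
  "frob_det q D phi [0, 1, 2, 3, 4] = det (top_row_mat 5 (\<lambda>j. phi j ^ q) (\<lambda>i j. D i (phi j)))"
proof -
  have "[0, 1, 2, 3, 4] = [0..<5]"
    by (simp add: upt_rec)
  then show ?thesis
    unfolding frob_det_def top_row_mat_def by (intro arg_cong[where f = det] eq_matI) auto
qed

lemma lex_less_upt_imp_not_sorted:
  assumes "lex_less nu [0..<k]"
  shows "\<not> sorted_wrt (<) nu"
proof
  assume "sorted_wrt (<) nu"
  obtain i where "i < k" and "i < length nu" and "nu ! i < [0..<k] ! i"
    using assms unfolding lex_less_def by auto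
  then show False
    using sorted_wrt_less_idx[OF \<open>sorted_wrt (<) nu\<close>] by fastforce
qed

lemma frobenius_classical_conics_iff:
  "frobenius_classical_conics q D x y \<longleftrightarrow> frob_det q D (conic_monomials x y) [0, 1, 2, 3, 4] \<noteq> 0"
proof -
  have "[0, 1, 2, 3, 4] = [0..<5]"
    by (simp add: upt_rec)
  then show ?thesis
    unfolding frobenius_classical_conics_def is_frob_order_seq_def admissible_seq_def
    using lex_less_upt_imp_not_sorted by auto
qed

context hasse_derivation
begin

lemma frob_det_conic_monomials_moebius:
  assumes moebius: "x * (1 - u * y) = v + w * y"
    and const: "constant_below 5 u" "constant_below 5 v" "constant_below 5 w"
  shows "(1 - u * y) ^ 10 * frob_det q D (conic_monomials x y) [0, 1, 2, 3, 4]
       = D 1 y ^ 10 * (x ^ q * (1 - u * y ^ q) - (v + w * y ^ q)) * u ^ 3 * (w + u * v) ^ 3"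
proof -
  let ?A = "\<lambda>l j. conic_coeffs u v w ! l ! j"
  have "\<forall>c \<in> set (concat (conic_coeffs u v w)). constant_below 5 c"
    using const by (auto simp: conic_coeffs_def)
  then have "constant_below 5 (?A l j)" if "l < 5" "j \<le> 5" for l j
    using that by (auto simp: conic_coeffs_def nth_Cons' numeral_eq_Suc)
  moreover have "(1 - u * y) ^ 2 * conic_monomials x y j = (\<Sum>l<5. ?A l j * y ^ l)" if "j \<le> 5" for j
    using moebius that by (rule conic_monomials_moebius)
  ultimately have reduction: "((1 - u * y) ^ 2) ^ 5 * det (top_row_mat 5 (\<lambda>j. conic_monomials x y j ^ q)
        (\<lambda>i j. D i (conic_monomials x y j)))
      = (\<Prod>l<5. D 1 y ^ l) * det (top_row_mat 5 (\<lambda>j. conic_monomials x y j ^ q) ?A)"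
    by (rule det_top_row_mat_hasse_reduction)
  have "(1 - u * y) ^ 10 * frob_det q D (conic_monomials x y) [0, 1, 2, 3, 4]
      = ((1 - u * y) ^ 2) ^ 5 * det (top_row_mat 5 (\<lambda>j. conic_monomials x y j ^ q)
        (\<lambda>i j. D i (conic_monomials x y j)))"
    unfolding frob_det_eq_det_top_row_mat by (simp flip: power_mult)
  also have "\<dots> = (\<Prod>l<5. D 1 y ^ l) * det (top_row_mat 5 (\<lambda>j. conic_monomials x y j ^ q) ?A)"
    by (rule reduction)
  also have "top_row_mat 5 (\<lambda>j. conic_monomials x y j ^ q) ?A
      = top_row_mat 5 (\<lambda>j. [1, x ^ q, y ^ q, (x ^ q) ^ 2, x ^ q * y ^ q, (y ^ q) ^ 2] ! j) ?A"
    by (rule top_row_mat_cong)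
      (auto simp: conic_monomials_def le_Suc_eq numeral_eq_Suc power_mult_distrib
        simp flip: power_mult[of _ 2] power_mult[of _ q] intro: arg_cong[where f = "\<lambda>n. _ ^ n"])
  also have "det \<dots> = (x ^ q * (1 - u * y ^ q) - (v + w * y ^ q)) * u ^ 3 * (w + u * v) ^ 3"
    by (rule det_top_row_mat_conic_coeffs)
  also have "(\<Prod>l<5. D 1 y ^ l) = D 1 y ^ 10"
    by (simp add: numeral_eq_Suc flip: power_add)
  finally show ?thesis
    by (simp only: mult.assoc)
qed

lemma D1_ne_0_moebius:
  assumes "generated_by F x y" and moebius: "x * (1 - u * y) = v + w * y" and "1 - u * y \<noteq> 0"
    and const: "constant_below 2 u" "constant_below 2 v" "constant_below 2 w"
  shows "D 1 y \<noteq> 0"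
proof
  assume "D 1 y = 0"
  then have "constant_below 2 y"
    by (simp add: constant_below_2_iff)
  then have "constant_below 2 ((v + w * y) / (1 - u * y))"
    using const \<open>1 - u * y \<noteq> 0\<close> by (intro constant_below_divide) auto
  moreover have "x = (v + w * y) / (1 - u * y)"
    using moebius \<open>1 - u * y \<noteq> 0\<close> by (simp add: eq_divide_eq)
  ultimately have "D 1 x = 0"
    by (simp add: constant_below_2_iff)
  then show False
    using D1_generator_ne_0[OF assms(1)] \<open>D 1 y = 0\<close> by simp
qed

lemma frobenius_classical_conics_moebius:
  assumes "generated_by F x y" and moebius: "x * (1 - u * y) = v + w * y" and "1 - u * y \<noteq> 0"
    and const: "constant_below 5 u" "constant_below 5 v" "constant_below 5 w"
    and "u \<noteq> 0" and "w + u * v \<noteq> 0" and "x ^ q * (1 - u * y ^ q) \<noteq> v + w * y ^ q"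
  shows "frobenius_classical_conics q D x y"
proof -
  have "D 1 y \<noteq> 0"
    using D1_ne_0_moebius[OF assms(1-3)] const constant_below_mono[of 5 _ 2] by simp
  then have "D 1 y ^ 10 * (x ^ q * (1 - u * y ^ q) - (v + w * y ^ q)) * u ^ 3 * (w + u * v) ^ 3 \<noteq> 0"
    using assms(7-9) by simp
  moreover have "(1 - u * y) ^ 10 * frob_det q D (conic_monomials x y) [0, 1, 2, 3, 4]
      = D 1 y ^ 10 * (x ^ q * (1 - u * y ^ q) - (v + w * y ^ q)) * u ^ 3 * (w + u * v) ^ 3"
    by (rule frob_det_conic_monomials_moebius[OF moebius const])
  ultimately have "frob_det q D (conic_monomials x y) [0, 1, 2, 3, 4] \<noteq> 0"
    by (metis mult_zero_right)
  then show ?thesis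
    by (simp add: frobenius_classical_conics_iff)
qed

end

section \<open>The curve\<close>

lemma transcendental_over_poly_eq_0:
  assumes "transcendental_over F x" and "poly_over F P" and "poly P x = 0"
  shows "P = 0"
proof (rule ccontr)
  assume "P \<noteq> 0"
  with assms(1,2) have "poly P x \<noteq> 0"
    unfolding transcendental_over_def poly_over_def by simp
  with assms(3) show False
    by simp
qed

lemma transcendental_over_ne_0:
  assumes "subring_set F" and "transcendental_over F x"
  shows "x \<noteq> 0"
proof
  assume "x = 0"
  have "poly_over F (monom 1 1)"
    using assms(1) by (simp add: subring_set.poly_over_monom subring_set.one_mem)
  moreover have "poly (monom 1 1) x = 0"
    using \<open>x = 0\<close> by (simp add: poly_monom)
  ultimately have "monom 1 1 = (0 :: 'a poly)"
    by (rule transcendental_over_poly_eq_0[OF assms(2)])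
  then show False
    by simp
qed

lemma bezout_power_dvd_mult_cancel:
  fixes a b c u v :: "'a::comm_ring_1"
  assumes bezout: "u * a + v * b = 1" and "a ^ k dvd c * b"
  shows "a ^ k dvd c"
  using assms(2)
proof (induction k)
  case (Suc k)
  then have "a ^ k dvd c"
    using dvd_mult_left power_Suc2 by metis
  have "a ^ Suc k dvd c * a"
    using mult_dvd_mono[OF \<open>a ^ k dvd c\<close> dvd_refl[of a]] by (simp only: power_Suc2)
  then have "a ^ Suc k dvd u * (c * a) + v * (c * b)"
    using Suc.prems by (simp add: dvd_add)
  also have "u * (c * a) + v * (c * b) = c * (u * a + v * b)"
    by (simp add: algebra_simps)
  finally show ?case
    using bezout by simp
qed simp

lemma bezout_power_dvd_mult_power_cancel:
  fixes a b c u v :: "'a::comm_ring_1"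
  assumes bezout: "u * a + v * b = 1" and "a ^ k dvd c * b ^ j"
  shows "a ^ k dvd c"
  using assms(2)
proof (induction j arbitrary: c)
  case (Suc j)
  have "c * b ^ Suc j = (c * b ^ j) * b"
    by (simp add: mult.assoc)
  then have "a ^ k dvd c * b ^ j"
    using Suc.prems bezout_power_dvd_mult_cancel[OF bezout] by metis
  then show ?case
    by (rule Suc.IH)
qed simp

lemma bezout_one_minus_monom:
  fixes a b c :: "'a::field"
  assumes "a + b * c \<noteq> 0"
  shows "[:a / (a + b * c):] * (1 - monom b n) + [:b / (a + b * c):] * (monom a n + [:c:]) = 1"
proof -
  have "smult a (1 - monom b n) + smult b (monom a n + [:c:]) = [:a + b * c:]"
    by (rule poly_eqI) (simp add: coeff_monom coeff_pCons algebra_simps split: nat.split)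
  then have "smult (1 / (a + b * c)) (smult a (1 - monom b n) + smult b (monom a n + [:c:])) = 1"
    using assms by (simp add: one_pCons)
  then show ?thesis
    by (simp add: smult_add_right)
qed

lemma degree_one_minus_monom:
  fixes b :: "'a::field"
  assumes "b \<noteq> 0" and "0 < n"
  shows "degree (1 - monom b n) = n"
proof (rule antisym)
  show "degree (1 - monom b n) \<le> n"
    by (rule degree_diff_le) (auto simp: degree_monom_le)
  show "n \<le> degree (1 - monom b n)"
    using assms by (intro le_degree) (simp add: coeff_monom)
qed

text \<open>1 - b X^n and a X^n + c are coprime, so (1 - b X^n)^(Q+m) has to divide (X^Q - b X^n)^m,
  which has too small a degree unless it vanishes.\<close>
lemma poly_power_identity_impossible:
  fixes a b c :: "'a::field"
  assumes b: "b \<noteq> 0" and abc: "a + b * c \<noteq> 0" and m: "0 < m" "m \<le> n" and Q: "0 < Q"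
  shows "(1 - monom b n) ^ (Q + m) * (monom c Q + monom a n) ^ m
       \<noteq> (monom 1 Q - monom b n) ^ m * (monom a n + [:c:]) ^ (Q + m)"
proof
  define N where "N = 1 - monom b n"
  define Psi where "Psi = monom 1 Q - monom b n"
  define Phi where "Phi = monom c Q + monom a n"
  assume "(1 - monom b n) ^ (Q + m) * (monom c Q + monom a n) ^ m
       = (monom 1 Q - monom b n) ^ m * (monom a n + [:c:]) ^ (Q + m)"
  then have eq: "N ^ (Q + m) * Phi ^ m = Psi ^ m * (monom a n + [:c:]) ^ (Q + m)"
    by (simp add: N_def Psi_def Phi_def)
  have "N ^ (Q + m) dvd Psi ^ m * (monom a n + [:c:]) ^ (Q + m)"
    unfolding eq[symmetric] by simp
  with bezout_one_minus_monom[OF abc] have "N ^ (Q + m) dvd Psi ^ m"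
    unfolding N_def by (rule bezout_power_dvd_mult_power_cancel)
  have "degree N = n"
    unfolding N_def using b m by (intro degree_one_minus_monom) auto
  then have "N \<noteq> 0"
    using m by auto
  show False
  proof (cases "Psi = 0")
    case True
    then have "coeff Psi Q = 0"
      by simp
    then have "n = Q" "b = 1"
      unfolding Psi_def by (auto simp: coeff_monom split: if_splits)
    have "Phi = 0"
      using eq True m \<open>N \<noteq> 0\<close> by (simp add: zero_power)
    then have "coeff Phi n = 0"
      by simp
    then show False
      using abc \<open>n = Q\<close> \<open>b = 1\<close> by (simp add: Phi_def coeff_monom add.commute)
  next
    case False
    have "degree Psi \<le> max Q n"
      unfolding Psi_def by (rule degree_diff_le) (auto simp: degree_monom_le le_max_iff_disj)
    have "(Q + m) * n = degree (N ^ (Q + m))"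
      using \<open>degree N = n\<close> by (simp add: degree_power_eq[OF \<open>N \<noteq> 0\<close>])
    also have "\<dots> \<le> degree (Psi ^ m)"
      using \<open>N ^ (Q + m) dvd Psi ^ m\<close> False by (intro dvd_imp_degree_le) auto
    also have "\<dots> \<le> max Q n * m"
      using degree_power_le[of Psi m] \<open>degree Psi \<le> max Q n\<close> by (meson le_trans mult_le_mono1)
    finally have "(Q + m) * n \<le> max Q n * m" .
    moreover have "max Q n * m < (Q + m) * n"
    proof (cases "Q \<le> n")
      case True
      then show ?thesis
        using Q m by (simp add: max_def algebra_simps)
    next
      case False
      have "Q * m \<le> Q * n"
        using m by simp
      also have "\<dots> < (Q + m) * n"
        using m by (simp add: algebra_simps)
      finally show ?thesis
        using False by (simp add: max_def mult.commute)
    qed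
    ultimately show False
      by simp
  qed
qed

lemma curve_y_ne_0:
  assumes F: "subring_set F" and trans: "transcendental_over F x"
    and "b \<in> F" and "b \<noteq> 0" and "0 < n" and "0 < m"
    and curve: "a * x ^ n * y ^ m + b * x ^ n + c * y ^ m = 1"
  shows "y \<noteq> 0"
proof
  assume "y = 0"
  have "poly_over F (monom b n - 1)"
    using F \<open>b \<in> F\<close> by (simp add: subring_set.poly_over_diff subring_set.poly_over_monom subring_set.poly_over_one)
  moreover have "poly (monom b n - 1) x = 0"
    using curve \<open>y = 0\<close> \<open>0 < m\<close> by (simp add: poly_monom zero_power)
  ultimately have "monom b n - 1 = 0"
    by (rule transcendental_over_poly_eq_0[OF trans])
  then have "coeff (monom b n - 1) n = 0"
    by simp
  then show False
    using \<open>b \<noteq> 0\<close> \<open>0 < n\<close> by (simp add: coeff_monom)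
qed

lemma curve_moebius:
  fixes a b c x y :: "'a::comm_ring_1"
  assumes "0 < m" and curve: "a * x ^ n * y ^ m + b * x ^ n + c * y ^ m = 1"
  shows "x * (1 - c * y ^ (m - 1) * y) = b * x ^ (n + 1) + a * x ^ (n + 1) * y ^ (m - 1) * y"
proof -
  have y: "y ^ (m - 1) * y = y ^ m"
    using \<open>0 < m\<close> by (simp flip: power_Suc2)
  have "x * (1 - c * y ^ (m - 1) * y) = x * (1 - c * y ^ m)"
    using y by (simp only: mult.assoc)
  also have "1 - c * y ^ m = a * x ^ n * y ^ m + b * x ^ n"
    using curve[symmetric] by (simp add: diff_eq_eq)
  also have "x * (a * x ^ n * y ^ m + b * x ^ n) = b * x ^ (n + 1) + a * x ^ (n + 1) * y ^ m"
    by (simp add: algebra_simps)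
  also have "\<dots> = b * x ^ (n + 1) + a * x ^ (n + 1) * y ^ (m - 1) * y"
    using y by (simp only: mult.assoc)
  finally show ?thesis .
qed

lemma curve_moebius_denominator_ne_0:
  fixes a b c x y :: "'a::field"
  assumes "x \<noteq> 0" and "a + b * c \<noteq> 0" and "0 < m"
    and curve: "a * x ^ n * y ^ m + b * x ^ n + c * y ^ m = 1"
  shows "1 - c * y ^ (m - 1) * y \<noteq> 0"
proof
  assume "1 - c * y ^ (m - 1) * y = 0"
  then have "c * y ^ m = 1"
    using \<open>0 < m\<close> by (simp add: mult.assoc flip: power_Suc2)
  then have "(a + b * c) * x ^ n = c * (a * x ^ n * y ^ m + b * x ^ n + c * y ^ m) - c"
    by (simp add: algebra_simps)
  also have "\<dots> = 0"
    using curve by simp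
  finally show False
    using assms(1,2) by simp
qed

lemma curve_frobenius_identity:
  fixes a b c x y :: "'a::field"
  assumes "x \<noteq> 0" and "0 < m" and curve: "a * x ^ n * y ^ m + b * x ^ n + c * y ^ m = 1"
    and frob: "x ^ Suc Q * (1 - c * y ^ (m - 1) * y ^ Suc Q)
      = b * x ^ (n + 1) + a * x ^ (n + 1) * y ^ (m - 1) * y ^ Suc Q"
  shows "(1 - b * x ^ n) ^ (Q + m) * (c * x ^ Q + a * x ^ n) ^ m
       = (x ^ Q - b * x ^ n) ^ m * (a * x ^ n + c) ^ (Q + m)"
proof -
  define W where "W = y ^ m"
  have "m - 1 + Suc Q = m + Q"
    using \<open>0 < m\<close> by simp
  then have yW: "y ^ (m - 1) * y ^ Suc Q = W * y ^ Q"
    unfolding W_def by (metis power_add)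
  have "x ^ Suc Q * (1 - c * (W * y ^ Q)) = b * x ^ (n + 1) + a * (x ^ (n + 1) * (W * y ^ Q))"
    using frob by (simp only: mult.assoc yW)
  then have "x * (x ^ Q * (1 - c * (W * y ^ Q))) = x * (b * x ^ n + a * x ^ n * (W * y ^ Q))"
    by (simp add: algebra_simps)
  then have "x ^ Q * (1 - c * (W * y ^ Q)) = b * x ^ n + a * x ^ n * (W * y ^ Q)"
    using \<open>x \<noteq> 0\<close> by simp
  then have frob': "W * y ^ Q * (a * x ^ n + c * x ^ Q) = x ^ Q - b * x ^ n"
    by (simp add: algebra_simps)
  have curve': "W * (a * x ^ n + c) = 1 - b * x ^ n"
    using curve by (simp add: W_def algebra_simps)
  have "(y ^ Q) ^ m = W ^ Q"
    by (simp add: W_def flip: power_mult) (simp add: mult.commute)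
  then have "W ^ (Q + m) * (a * x ^ n + c * x ^ Q) ^ m = (x ^ Q - b * x ^ n) ^ m"
    unfolding frob'[symmetric] by (simp add: power_mult_distrib power_add mult_ac)
  then show ?thesis
    unfolding curve'[symmetric] by (simp add: power_mult_distrib mult_ac add.commute)
qed

lemma curve_frobenius_point_off_moebius:
  assumes F: "subring_set F" and trans: "transcendental_over F x"
    and "a \<in> F" and "b \<in> F" and "c \<in> F" and "b \<noteq> 0" and "a + b * c \<noteq> 0"
    and "0 < m" and "m \<le> n" and "2 \<le> q" and curve: "a * x ^ n * y ^ m + b * x ^ n + c * y ^ m = 1"
  shows "x ^ q * (1 - c * y ^ (m - 1) * y ^ q) \<noteq> b * x ^ (n + 1) + a * x ^ (n + 1) * y ^ (m - 1) * y ^ q"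
proof
  define Q where "Q = q - 1"
  have q: "q = Suc Q" and "0 < Q"
    using \<open>2 \<le> q\<close> by (simp_all add: Q_def)
  assume "x ^ q * (1 - c * y ^ (m - 1) * y ^ q) = b * x ^ (n + 1) + a * x ^ (n + 1) * y ^ (m - 1) * y ^ q"
  then have "(1 - b * x ^ n) ^ (Q + m) * (c * x ^ Q + a * x ^ n) ^ m
      = (x ^ Q - b * x ^ n) ^ m * (a * x ^ n + c) ^ (Q + m)"
    using curve_frobenius_identity[OF transcendental_over_ne_0[OF F trans] \<open>0 < m\<close> curve]
    unfolding q by blast
  moreover define P where "P = (1 - monom b n) ^ (Q + m) * (monom c Q + monom a n) ^ m
      - (monom 1 Q - monom b n) ^ m * (monom a n + [:c:]) ^ (Q + m)"
  ultimately have "poly P x = 0"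
    by (simp add: poly_monom)
  moreover have "poly_over F P"
    unfolding P_def using F \<open>a \<in> F\<close> \<open>b \<in> F\<close> \<open>c \<in> F\<close>
    by (simp add: subring_set.poly_over_diff subring_set.poly_over_mult subring_set.poly_over_power
        subring_set.poly_over_add subring_set.poly_over_monom subring_set.poly_over_one
        subring_set.one_mem flip: monom_0)
  ultimately have "P = 0"
    using transcendental_over_poly_eq_0[OF trans] by blast
  then show False
    using poly_power_identity_impossible[OF \<open>b \<noteq> 0\<close> \<open>a + b * c \<noteq> 0\<close> \<open>0 < m\<close> \<open>m \<le> n\<close> \<open>0 < Q\<close>]
    by (simp add: P_def)
qed

theorem proposition4p11:
  fixes p h q m n :: nat and a b c x y :: "'k::field"
  assumes "prime p" and "p > 5" and "h \<ge> 1" and "q = p ^ h"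
    and "of_nat p = (0::'k)"
    and "card (Fq_set q :: 'k set) = q"
    and "a \<in> Fq_set q" and "b \<in> Fq_set q" and "c \<in> Fq_set q"
    and "a \<noteq> 0" and "b \<noteq> 0" and "c \<noteq> 0" and "c \<noteq> - (a / b)"
    and "m > 0" and "n > 0" and "\<not> p dvd (m * n)" and "n \<ge> m" and "min m n > 2"
    and "p dvd (n + 1)" and "p dvd (m - 1)"
    and "a * x ^ n * y ^ m + b * x ^ n + c * y ^ m = 1"
    and "transcendental_over (Fq_set q) x"
    and "generated_by (Fq_set q) x y"
  shows "\<forall>tau D. is_hasse_deriv (Fq_set q) tau D \<longrightarrow> frobenius_classical_conics q D x y"
proof (intro allI impI)
  fix tau :: 'k and D :: "nat \<Rightarrow> 'k \<Rightarrow> 'k"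
  assume "is_hasse_deriv (Fq_set q) tau D"
  then interpret hasse_derivation "Fq_set q" tau D
    by unfold_locales
  note curve = \<open>a * x ^ n * y ^ m + b * x ^ n + c * y ^ m = 1\<close>
  note trans = \<open>transcendental_over (Fq_set q) x\<close>
  have F: "subring_set (Fq_set q :: 'k set)"
    using CHAR_eq_prime[OF \<open>prime p\<close> \<open>of_nat p = 0\<close>] \<open>prime p\<close> \<open>q = p ^ h\<close>
    by (intro subring_set_Fq_set) simp_all
  have "x \<noteq> 0"
    using F trans by (rule transcendental_over_ne_0)
  have "y \<noteq> 0"
    using F trans \<open>b \<in> Fq_set q\<close> \<open>b \<noteq> 0\<close> \<open>n > 0\<close> \<open>m > 0\<close> curve by (rule curve_y_ne_0)
  have "a + b * c \<noteq> 0"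
    using \<open>b \<noteq> 0\<close> \<open>c \<noteq> - (a / b)\<close> by (auto simp: field_simps eq_neg_iff_add_eq_0)
  have "2 \<le> q"
    using self_le_power[of p h] \<open>p > 5\<close> \<open>h \<ge> 1\<close> \<open>q = p ^ h\<close> by simp
  have constants: "constant_below p (x ^ (n + 1))" "constant_below p (y ^ (m - 1))"
    using constant_below_char_power_multiple[OF \<open>prime p\<close> \<open>of_nat p = 0\<close>]
      \<open>p dvd (n + 1)\<close> \<open>p dvd (m - 1)\<close> by blast+
  define u v w
    where "u = c * y ^ (m - 1)" and "v = b * x ^ (n + 1)" and "w = a * x ^ (n + 1) * y ^ (m - 1)"
  show "frobenius_classical_conics q D x y"
  proof (rule frobenius_classical_conics_moebius)
    show "x * (1 - u * y) = v + w * y"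
      unfolding u_def v_def w_def using \<open>m > 0\<close> curve by (rule curve_moebius)
    show "1 - u * y \<noteq> 0"
      unfolding u_def using \<open>x \<noteq> 0\<close> \<open>a + b * c \<noteq> 0\<close> \<open>m > 0\<close> curve
      by (rule curve_moebius_denominator_ne_0)
    show "x ^ q * (1 - u * y ^ q) \<noteq> v + w * y ^ q"
      unfolding u_def v_def w_def
      using F trans \<open>a \<in> Fq_set q\<close> \<open>b \<in> Fq_set q\<close> \<open>c \<in> Fq_set q\<close> \<open>b \<noteq> 0\<close>
        \<open>a + b * c \<noteq> 0\<close> \<open>m > 0\<close> \<open>n \<ge> m\<close> \<open>2 \<le> q\<close> curve
      by (rule curve_frobenius_point_off_moebius)
    have "w + u * v = (a + b * c) * x ^ (n + 1) * y ^ (m - 1)"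
      by (simp add: u_def v_def w_def algebra_simps)
    then show "u \<noteq> 0" and "w + u * v \<noteq> 0"
      using \<open>x \<noteq> 0\<close> \<open>y \<noteq> 0\<close> \<open>a + b * c \<noteq> 0\<close> \<open>c \<noteq> 0\<close> by (simp_all add: u_def)
    show "constant_below 5 u" "constant_below 5 v" "constant_below 5 w"
      using constants \<open>p > 5\<close> \<open>a \<in> Fq_set q\<close> \<open>b \<in> Fq_set q\<close> \<open>c \<in> Fq_set q\<close>
        constant_below_mono[of p _ 5]
      by (simp_all add: u_def v_def w_def constant_below_mult constant_below_mem)
  qed (rule \<open>generated_by (Fq_set q) x y\<close>)
qed

end
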